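(* Let $I,S\ge 0$ be integers and consider the pairing process described in the context. The minimum, over all possible wirings, of the number of bb-pairings equals $$L(I,S)=\begin{cases}0 & \text{if } I\le S,\\ \frac{I-S}{2} & \text{if } I>S \text{ and } I-S \text{ is even},\\ \frac{I-S-1}{2} & \text{if } I>S \text{ and } I-S \text{ is odd},\end{cases}$$ and the maximum number of bb-pairings in a possible wiring is $\lfloor I/2\rfloor$.
   Context: Pairing process: there are $I$ infected devices $b_1,\dots,b_I$ and $S$ clean devices $w_1,\dots,w_S$. For $t=1,\dots,I$ in this order: if $b_t$ is not yet paired and at least one device other than $b_t$ is not yet paired, then $b_t$ chooses one of the currently unpaired devices other than itself uniformly at random, independently of previous choices, and becomes paired with it; otherwise $b_t$ does nothing. Each device belongs to at most one pair. The wiring is the final set of pairs; a bb-pairing is a pair consisting of two infected devices; a wiring is possible if it occurs with positive probability. *)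

theory Defs
  imports Main
begin

text \<open>Devices: infected device b_t is Inl t (t < I), clean device w_j is Inr j (j < S).
  Indices are 0-based: step t (0-based) is performed by Inl t.\<close>

type_synonym device = "nat + nat"

definition devices :: "nat \<Rightarrow> nat \<Rightarrow> device set" where
  "devices I S = Inl ` {..<I} \<union> Inr ` {..<S}"

definition unpaired :: "nat \<Rightarrow> nat \<Rightarrow> device set set \<Rightarrow> device set" where
  "unpaired I S P = devices I S - \<Union> P"

text \<open>run I S t P: after the first t steps of the process, the set of pairs P can have
  arisen with positive probability (every individual uniform choice has positive
  probability, so this is exactly nondeterministic reachability).\<close>

inductive run :: "nat \<Rightarrow> nat \<Rightarrow> nat \<Rightarrow> device set set \<Rightarrow> bool" for I S where
  start: "run I S 0 {}"
| idle: "\<lbrakk> run I S t P; t < I;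
           Inl t \<notin> unpaired I S P \<or> unpaired I S P - {Inl t} = {} \<rbrakk>
         \<Longrightarrow> run I S (Suc t) P"
| choose: "\<lbrakk> run I S t P; t < I; Inl t \<in> unpaired I S P;
             d \<in> unpaired I S P; d \<noteq> Inl t \<rbrakk>
         \<Longrightarrow> run I S (Suc t) (insert {Inl t, d} P)"

definition possible_wiring :: "nat \<Rightarrow> nat \<Rightarrow> device set set \<Rightarrow> bool" where
  "possible_wiring I S W \<longleftrightarrow> run I S I W"

definition is_infected :: "device \<Rightarrow> bool" where
  "is_infected x \<longleftrightarrow> (\<exists>t. x = Inl t)"

definition bb_count :: "device set set \<Rightarrow> nat" where
  "bb_count W = card {p \<in> W. \<forall>x\<in>p. is_infected x}"

definition L :: "nat \<Rightarrow> nat \<Rightarrow> nat" where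
  "L I S = (if I \<le> S then 0
            else if even (I - S) then (I - S) div 2
            else (I - S - 1) div 2)"

end

theory Submission
  imports Defs
begin

text \<open>Every pair contains an infected device, so counting paired devices gives
  #(paired infected) = 2 bb + #(paired clean). A possible wiring pairs at most S clean devices
  and leaves at most one infected device unpaired, which yields the lower bound L I S = (I - S) div 2;
  it pairs at most I infected devices, which yields the upper bound I div 2. Both bounds are attained:
  let b_i choose w_i for i < min I S, resp. let b_(2i) choose b_(2i+1), and complete the run arbitrarily.\<close>

lemma is_infected_Inl [simp]: "is_infected (Inl t)"
  and not_is_infected_Inr [simp]: "\<not> is_infected (Inr j)"
  by (auto simp: is_infected_def)

lemma finite_devices [simp]: "finite (devices I S)"
  by (simp add: devices_def)

lemma run_Union_subset_devices: "run I S t P \<Longrightarrow> \<Union>P \<subseteq> devices I S"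
  by (induction rule: run.induct) (auto simp: unpaired_def devices_def)

lemma run_finite: "run I S t P \<Longrightarrow> finite P"
  by (induction rule: run.induct) auto

lemma run_finite_Union: "run I S t P \<Longrightarrow> finite (\<Union>P)"
  by (rule finite_subset[OF run_Union_subset_devices finite_devices])

lemma run_unpaired_earlier:
  "run I S t P \<Longrightarrow> s < t \<Longrightarrow> Inl s \<in> \<Union>P \<or> unpaired I S P \<subseteq> {Inl s}"
proof (induction arbitrary: s rule: run.induct)
  case start
  then show ?case by simp
next
  case (idle t P)
  then show ?case by (auto simp: less_Suc_eq unpaired_def devices_def)
next
  case (choose t P d)
  have "unpaired I S (insert {Inl t, d} P) \<subseteq> unpaired I S P"
    by (auto simp: unpaired_def)
  with choose show ?case by (auto simp: less_Suc_eq)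
qed

lemma bb_count_mono: "P \<subseteq> Q \<Longrightarrow> finite Q \<Longrightarrow> bb_count P \<le> bb_count Q"
  unfolding bb_count_def by (rule card_mono) auto

lemma run_card_paired_infected:
  "run I S t P \<Longrightarrow> card (\<Union>P \<inter> range Inl) = 2 * bb_count P + card (\<Union>P \<inter> range Inr)"
proof (induction rule: run.induct)
  case start
  then show ?case by (simp add: bb_count_def)
next
  case (idle t P)
  then show ?case by simp
next
  case (choose t P d)
  let ?p = "{Inl t, d}"
  have fin: "finite P" "finite (\<Union>P)"
    using choose.hyps(1) by (auto intro: run_finite run_finite_Union)
  have disj: "?p \<inter> \<Union>P = {}" and new: "?p \<notin> P"
    using choose.hyps by (auto simp: unpaired_def)
  have card_Int: "card (\<Union>(insert ?p P) \<inter> C) = card (?p \<inter> C) + card (\<Union>P \<inter> C)" for C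
  proof -
    have "\<Union>(insert ?p P) \<inter> C = (?p \<inter> C) \<union> (\<Union>P \<inter> C)" by blast
    moreover have "(?p \<inter> C) \<inter> (\<Union>P \<inter> C) = {}" using disj by blast
    ultimately show ?thesis using fin by (simp add: card_Un_disjoint)
  qed
  let ?B = "\<lambda>P. {p \<in> P. \<forall>x\<in>p. is_infected x}"
  have "?B (insert ?p P) = (if is_infected d then insert ?p (?B P) else ?B P)"
    by auto
  then have bb: "bb_count (insert ?p P) = bb_count P + (if is_infected d then 1 else 0)"
    using new fin(1) by (simp add: bb_count_def)
  show ?case
  proof (cases d)
    case (Inl s)
    then have Inl_part: "?p \<inter> range Inl = ?p" and Inr_part: "?p \<inter> range Inr = {}"
      by auto
    have "card ?p = 2" using Inl choose.hyps(5) by auto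
    with Inl show ?thesis
      using choose.IH card_Int[of "range Inl", unfolded Inl_part]
        card_Int[of "range Inr", unfolded Inr_part] bb
      by simp
  next
    case (Inr j)
    then have Inl_part: "?p \<inter> range Inl = {Inl t}" and Inr_part: "?p \<inter> range Inr = {Inr j}"
      by auto
    with Inr show ?thesis
      using choose.IH card_Int[of "range Inl", unfolded Inl_part]
        card_Int[of "range Inr", unfolded Inr_part] bb
      by simp
  qed
qed

lemma run_extends_to_wiring:
  assumes "run I S t P" "t \<le> I"
  shows "\<exists>W. possible_wiring I S W \<and> P \<subseteq> W"
  using assms
proof (induction "I - t" arbitrary: t P)
  case 0
  then show ?case by (auto simp: possible_wiring_def)
next
  case (Suc n)
  then have t: "t < I" "n = I - Suc t" by auto
  show ?case
  proof (cases "Inl t \<notin> unpaired I S P \<or> unpaired I S P - {Inl t} = {}")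
    case True
    with Suc.prems t have "run I S (Suc t) P" by (blast intro: run.idle)
    with Suc.hyps(1) t show ?thesis by auto
  next
    case False
    then obtain d where "Inl t \<in> unpaired I S P" "d \<in> unpaired I S P" "d \<noteq> Inl t" by blast
    with Suc.prems t have "run I S (Suc t) (insert {Inl t, d} P)" by (blast intro: run.choose)
    then obtain W where "possible_wiring I S W" "insert {Inl t, d} P \<subseteq> W"
      using Suc.hyps(1)[of "Suc t"] t Suc_leI[OF t(1)] by blast
    then show ?thesis by blast
  qed
qed

lemma run_pair_with_clean:
  "m \<le> I \<Longrightarrow> m \<le> S \<Longrightarrow> run I S m ((\<lambda>i. {Inl i, Inr i}) ` {..<m})"
proof (induction m)
  case 0
  then show ?case by (simp add: run.start)
next
  case (Suc m)
  let ?P = "(\<lambda>i. {Inl i, Inr i}) ` {..<m}"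
  have "Inl m \<in> unpaired I S ?P" "Inr m \<in> unpaired I S ?P"
    using Suc.prems by (auto simp: unpaired_def devices_def)
  with Suc have "run I S (Suc m) (insert {Inl m, Inr m} ?P)"
    by (intro run.choose) auto
  then show ?case by (simp add: lessThan_Suc)
qed

lemma run_pair_infected:
  "2 * k \<le> I \<Longrightarrow> run I S (2 * k) ((\<lambda>i. {Inl (2 * i), Inl (2 * i + 1)}) ` {..<k})"
proof (induction k)
  case 0
  then show ?case by (simp add: run.start)
next
  case (Suc k)
  let ?P = "(\<lambda>i. {Inl (2 * i), Inl (2 * i + 1)}) ` {..<k}"
  let ?Q = "insert {Inl (2 * k), Inl (2 * k + 1)} ?P"
  have "Inl (2 * k) \<in> unpaired I S ?P" "Inl (2 * k + 1) \<in> unpaired I S ?P"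
    using Suc.prems by (auto simp: unpaired_def devices_def)
  with Suc have "run I S (Suc (2 * k)) ?Q"
    by (intro run.choose) auto
  moreover have "Inl (Suc (2 * k)) \<notin> unpaired I S ?Q"
    by (auto simp: unpaired_def)
  moreover have "Suc (2 * k) < I" using Suc.prems by simp
  ultimately have "run I S (Suc (Suc (2 * k))) ?Q" by (blast intro: run.idle)
  then show ?case by (simp add: lessThan_Suc)
qed

lemma card_paired_le_devices:
  assumes "\<Union>W \<subseteq> devices I S"
  shows "card (\<Union>W \<inter> range Inl) \<le> I" "card (\<Union>W \<inter> range Inr) \<le> S"
proof -
  have "\<Union>W \<inter> range Inl \<subseteq> Inl ` {..<I}" "\<Union>W \<inter> range Inr \<subseteq> Inr ` {..<S}"
    using assms by (auto simp: devices_def)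
  then have "card (\<Union>W \<inter> range Inl) \<le> card (Inl ` {..<I} :: device set)"
    "card (\<Union>W \<inter> range Inr) \<le> card (Inr ` {..<S} :: device set)"
    by (simp_all add: card_mono)
  then show "card (\<Union>W \<inter> range Inl) \<le> I" "card (\<Union>W \<inter> range Inr) \<le> S"
    by (simp_all add: card_image)
qed

lemma wiring_card_paired_infected_ge:
  assumes "possible_wiring I S W"
  shows "I \<le> card (\<Union>W \<inter> range Inl) + 1"
proof -
  let ?D = "Inl ` {..<I} :: device set"
  let ?A = "\<Union>W \<inter> range Inl"
  have run: "run I S I W" using assms by (simp add: possible_wiring_def)
  have "card (?D - ?A) \<le> 1"
  proof (cases "?D - ?A = {}")
    case True
    then show ?thesis by (simp only: card.empty)
  next
    case False
    then obtain s where s: "s < I" "Inl s \<notin> \<Union>W" by blast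
    have "?D - ?A \<subseteq> unpaired I S W" by (auto simp: unpaired_def devices_def)
    also have "\<dots> \<subseteq> {Inl s}" using run_unpaired_earlier[OF run s(1)] s(2) by blast
    finally have "card (?D - ?A) \<le> card {Inl s :: device}" by (rule card_mono[rotated]) simp
    then show ?thesis by simp
  qed
  moreover have "card ?D \<le> card (?A \<union> (?D - ?A))"
    using run_finite_Union[OF run] by (intro card_mono) auto
  moreover have "card (?A \<union> (?D - ?A)) \<le> card ?A + card (?D - ?A)"
    by (rule card_Un_le)
  ultimately show ?thesis by (simp add: card_image)
qed

lemma L_eq: "L I S = (I - S) div 2"
proof -
  have "(d - 1) div 2 = d div 2" if "odd d" for d :: nat using that by (auto elim: oddE)
  from this[of "I - S"] show ?thesis by (simp add: L_def)
qed

lemma wiring_bb_count_bounds: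
  assumes "possible_wiring I S W"
  shows "L I S \<le> bb_count W" "bb_count W \<le> I div 2"
proof -
  have run: "run I S I W" using assms by (simp add: possible_wiring_def)
  note count = run_card_paired_infected[OF run]
    and le = card_paired_le_devices[OF run_Union_subset_devices[OF run]]
    and ge = wiring_card_paired_infected_ge[OF assms]
  from count le ge show "L I S \<le> bb_count W" by (simp add: L_eq)
  from count le show "bb_count W \<le> I div 2" by simp
qed

lemma exists_wiring_bb_count_L: "\<exists>W. possible_wiring I S W \<and> bb_count W = L I S"
proof -
  let ?m = "min I S"
  obtain W where W: "possible_wiring I S W" "(\<lambda>i. {Inl i, Inr i}) ` {..<?m} \<subseteq> W"
    using run_extends_to_wiring[OF run_pair_with_clean] by (meson min.cobounded1 min.cobounded2)
  then have run: "run I S I W" by (simp add: possible_wiring_def)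
  have "Inr ` {..<?m} \<subseteq> \<Union>W \<inter> range Inr" using W(2) by blast
  then have "card (Inr ` {..<?m} :: device set) \<le> card (\<Union>W \<inter> range Inr)"
    using run_finite_Union[OF run] by (simp add: card_mono)
  then have "?m \<le> card (\<Union>W \<inter> range Inr)" by (simp add: card_image)
  then have "bb_count W \<le> L I S"
    using run_card_paired_infected[OF run] card_paired_le_devices(1)[OF run_Union_subset_devices[OF run]]
    by (simp add: L_eq)
  with W(1) wiring_bb_count_bounds(1) show ?thesis by (meson le_antisym)
qed

lemma exists_wiring_bb_count_half: "\<exists>W. possible_wiring I S W \<and> bb_count W = I div 2"
proof -
  let ?f = "\<lambda>i. {Inl (2 * i), Inl (2 * i + 1)} :: device set"
  have "2 * (I div 2) \<le> I" by simp
  then obtain W where W: "possible_wiring I S W" "?f ` {..<I div 2} \<subseteq> W"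
    using run_extends_to_wiring[OF run_pair_infected] by blast
  have "{p \<in> ?f ` {..<I div 2}. \<forall>x\<in>p. is_infected x} = ?f ` {..<I div 2}" by auto
  moreover have "inj_on ?f {..<I div 2}" by (auto simp: inj_on_def doubleton_eq_iff)
  ultimately have "bb_count (?f ` {..<I div 2}) = I div 2"
    by (simp add: bb_count_def card_image)
  moreover have "finite W" using W(1) run_finite by (simp add: possible_wiring_def)
  ultimately have "I div 2 \<le> bb_count W"
    using bb_count_mono[OF W(2)] by simp
  with W(1) wiring_bb_count_bounds(2) show ?thesis by (meson le_antisym)
qed

theorem lemma1:
  fixes I S :: nat
  shows "Min (bb_count ` {W. possible_wiring I S W}) = L I S
       \<and> Max (bb_count ` {W. possible_wiring I S W}) = I div 2"
proof -
  let ?A = "bb_count ` {W. possible_wiring I S W}"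
  have bounds: "\<And>n. n \<in> ?A \<Longrightarrow> L I S \<le> n \<and> n \<le> I div 2"
    using wiring_bb_count_bounds by blast
  then have "finite ?A" by (meson atMost_iff finite_atMost finite_subset subsetI)
  moreover have "L I S \<in> ?A" "I div 2 \<in> ?A"
    using exists_wiring_bb_count_L exists_wiring_bb_count_half by (metis image_eqI mem_Collect_eq)+
  ultimately show ?thesis using bounds by (simp add: Min_eqI Max_eqI)
qed

end
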